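(* For every $n\in\{2,6,10,\dots\}$, every increasing path of $f_n$ that starts at the origin and ends at a local maximum of $f_n$ has length at least $2^{n/4}$. Hence any local search algorithm (with any neighbor selection and tie-breaking rule) that starts at the origin and moves at each step to a neighbor with strictly larger value of $f_n$ takes at least $2^{n/4}$ steps to reach a local maximum; since $f_n$ has encoding size polynomial in $n$, this is exponential both in $n$ and in the size of $f_n$.
   Context: For $n\in\{2,6,10,\dots\}$ define polynomials $f_n$ in variables $x_1,\dots,x_n$ (evaluated on $\{0,1\}^n$) recursively. Set $f_2(x_1,x_2):=x_1+x_2$. For $n\in\{2,6,10,\dots\}$, write $\mathbf{x}=(x_1,\dots,x_n)$, $S:=\sum_{i=1}^n x_i$, let $M_n:=\max_{\{0,1\}^n} f_n-\min_{\{0,1\}^n} f_n+1$, and define $f_{n+4}(\mathbf{x},x_{n+1},x_{n+2},x_{n+3},x_{n+4}) := f_n(\mathbf{x}) - M_n n^2 x_{n+1} + M_n(n+1) S x_{n+1} - x_{n+2} - 2M_n n S x_{n+2} + 2M_n n(n+2) x_{n+1}x_{n+2} - 4 S x_{n+3} + 2x_{n+1}x_{n+3} + 2x_{n+2}x_{n+3} - 3x_{n+3} + (M_n(n-1)+4) S x_{n+4} + 6M_n n^2 x_{n+3}x_{n+4} - 5M_n n^2 x_{n+4}$. For a function $f:\{0,1\}^m\to\mathbb{R}$, an increasing path is a sequence of vertices $v_0,v_1,\dots,v_k$ of $\{0,1\}^m$ such that consecutive vertices differ in exactly one coordinate and $f(v_{j+1})>f(v_j)$ for all $j$; its length is $k$.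 A local maximum is a vertex no neighbor of which (vertex differing in exactly one coordinate) has strictly larger value. *)

theory Defs
  imports Complex_Main
begin

definition cube :: "nat \<Rightarrow> (nat \<Rightarrow> real) set" where
  "cube m = {x. \<forall>i. (i \<in> {1..m} \<longrightarrow> x i \<in> {0,1}) \<and> (i \<notin> {1..m} \<longrightarrow> x i = 0)}"

text \<open>fpoly_aux k is the polynomial f_n with n = 4k+2.\<close>

primrec fpoly_aux :: "nat \<Rightarrow> (nat \<Rightarrow> real) \<Rightarrow> real" where
  "fpoly_aux 0 = (\<lambda>x. x 1 + x 2)"
| "fpoly_aux (Suc k) =
     (let g = fpoly_aux k;
          n = 4 * k + 2;
          M = Max (g ` cube n) - Min (g ` cube n) + 1;
          nr = real n
      in (\<lambda>x. let S = (\<Sum>i = 1..n. x i) in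
             g x - M * nr^2 * x (n+1) + M * (nr+1) * S * x (n+1)
             - x (n+2) - 2 * M * nr * S * x (n+2)
             + 2 * M * nr * (nr+2) * x (n+1) * x (n+2)
             - 4 * S * x (n+3) + 2 * x (n+1) * x (n+3) + 2 * x (n+2) * x (n+3)
             - 3 * x (n+3)
             + (M * (nr - 1) + 4) * S * x (n+4)
             + 6 * M * nr^2 * x (n+3) * x (n+4)
             - 5 * M * nr^2 * x (n+4)))"

definition fpoly :: "nat \<Rightarrow> (nat \<Rightarrow> real) \<Rightarrow> real" where
  "fpoly n = fpoly_aux ((n - 2) div 4)"

definition adjacent :: "nat \<Rightarrow> (nat \<Rightarrow> real) \<Rightarrow> (nat \<Rightarrow> real) \<Rightarrow> bool" where
  "adjacent m v w \<longleftrightarrow> v \<in> cube m \<and> w \<in> cube m \<and> card {i. v i \<noteq> w i} = 1"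

text \<open>An increasing path v_0,...,v_k is a nonempty list; its length is length p - 1.\<close>

definition increasing_path :: "nat \<Rightarrow> ((nat \<Rightarrow> real) \<Rightarrow> real) \<Rightarrow> (nat \<Rightarrow> real) list \<Rightarrow> bool" where
  "increasing_path m f p \<longleftrightarrow> p \<noteq> [] \<and> set p \<subseteq> cube m \<and>
     (\<forall>j. Suc j < length p \<longrightarrow> adjacent m (p ! j) (p ! Suc j) \<and> f (p ! Suc j) > f (p ! j))"

definition local_max :: "nat \<Rightarrow> ((nat \<Rightarrow> real) \<Rightarrow> real) \<Rightarrow> (nat \<Rightarrow> real) \<Rightarrow> bool" where
  "local_max m f v \<longleftrightarrow> v \<in> cube m \<and> (\<forall>w. adjacent m v w \<longrightarrow> \<not> f w > f v)"

end

theory Submission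
  imports Defs
begin

text \<open>
  Write a vertex of the (n+4)-cube as (x, y) with y = (x_{n+1}, ..., x_{n+4}) and let S be the
  number of ones in x. Then f_{n+4}(x, y) = f_n(x) + S slope(y) + offset(y), and since M_n exceeds
  the oscillation of f_n, the y-part dominates: along an increasing path from the origin, y climbs
  the staircase 0000, 1000, 1100, 1110, 1111 one stair at a time, it can leave 0000 only when x is
  all ones and 1100 only when x is all zeros, and while y is 0000 or 1111 the slope vanishes, so
  that the moves in x form an increasing path of f_n. Moreover a local maximum reached this way
  has y = 1111. Hence the path contains an increasing path of f_n from the origin to the all-ones
  vertex and another one from the origin to a local maximum of f_n. By induction, starting from
  f_2 = x_1 + x_2, each of them ends at the all-ones vertex and has length at least 2^((n+2)/4),
  so the length doubles from f_n to f_{n+4}.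
\<close>

lemma cube_coord: "v \<in> cube m \<Longrightarrow> v i = 0 \<or> v i = 1"
  unfolding cube_def by (cases "i \<in> {1..m}") auto

lemma finite_cube: "finite (cube m)"
proof (rule finite_subset)
  show "cube m \<subseteq> (\<lambda>A i. of_bool (i \<in> A)) ` Pow {1..m}"
  proof
    fix v assume v: "v \<in> cube m"
    have "v = (\<lambda>i. of_bool (i \<in> {i \<in> {1..m}. v i = 1}))"
    proof
      fix i show "v i = of_bool (i \<in> {i \<in> {1..m}. v i = 1})"
        using v cube_coord[OF v, of i] unfolding cube_def by (cases "i \<in> {1..m}") auto
    qed
    then show "v \<in> (\<lambda>A i. of_bool (i \<in> A)) ` Pow {1..m}" by blast
  qed
qed simp

lemma zero_in_cube: "(\<lambda>_. 0) \<in> cube m"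
  by (simp add: cube_def)

definition all_ones :: "nat \<Rightarrow> nat \<Rightarrow> real" where
  "all_ones m i = of_bool (i \<in> {1..m})"

lemma all_ones_in_cube: "all_ones m \<in> cube m"
  by (simp add: cube_def all_ones_def)

lemma flip_in_cube: "v \<in> cube m \<Longrightarrow> j \<in> {1..m} \<Longrightarrow> v(j := 1 - v j) \<in> cube m"
  unfolding cube_def by auto

lemma adjacent_iff_flip:
  "adjacent m v w \<longleftrightarrow> v \<in> cube m \<and> (\<exists>j\<in>{1..m}. w = v(j := 1 - v j))"
proof
  assume "adjacent m v w"
  then have v: "v \<in> cube m" and w: "w \<in> cube m" and "card {i. v i \<noteq> w i} = 1"
    unfolding adjacent_def by auto
  then obtain j where "{i. v i \<noteq> w i} = {j}" using card_1_singletonE by blast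
  then have diff: "v i \<noteq> w i \<longleftrightarrow> i = j" for i by blast
  have "j \<in> {1..m}"
  proof (rule ccontr)
    assume "j \<notin> {1..m}"
    then have "v j = w j" using v w by (simp add: cube_def)
    then show False using diff by blast
  qed
  moreover have "w = v(j := 1 - v j)"
  proof
    fix i show "w i = (v(j := 1 - v j)) i"
      using diff[of i] cube_coord[OF v, of j] cube_coord[OF w, of j] by (cases "i = j") auto
  qed
  ultimately show "v \<in> cube m \<and> (\<exists>j\<in>{1..m}. w = v(j := 1 - v j))" using v by blast
next
  assume "v \<in> cube m \<and> (\<exists>j\<in>{1..m}. w = v(j := 1 - v j))"
  then obtain j where v: "v \<in> cube m" and j: "j \<in> {1..m}" and w: "w = v(j := 1 - v j)" by blast
  have "v j \<noteq> 1 - v j" using cube_coord[OF v, of j] by auto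
  then have "{i. v i \<noteq> w i} = {j}" using w by auto
  then show "adjacent m v w" unfolding adjacent_def using v w flip_in_cube[OF v j] by simp
qed

lemma adjacent_flip: "v \<in> cube m \<Longrightarrow> j \<in> {1..m} \<Longrightarrow> adjacent m v (v(j := 1 - v j))"
  unfolding adjacent_iff_flip by blast

definition trunc :: "nat \<Rightarrow> (nat \<Rightarrow> real) \<Rightarrow> nat \<Rightarrow> real" where
  "trunc n v i = (if i \<in> {1..n} then v i else 0)"

lemma trunc_in_cube: "v \<in> cube m \<Longrightarrow> n \<le> m \<Longrightarrow> trunc n v \<in> cube n"
  unfolding cube_def trunc_def by auto

lemma trunc_zero: "trunc n (\<lambda>_. 0) = (\<lambda>_. 0)"
  by (rule ext) (simp add: trunc_def)

lemma trunc_fun_upd: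
  "trunc n (v(j := y)) = (if j \<in> {1..n} then (trunc n v)(j := y) else trunc n v)"
  by (auto simp: trunc_def)

lemma adjacent_trunc_flip:
  assumes "v \<in> cube m" "n \<le> m" "j \<in> {1..n}"
  shows "adjacent n (trunc n v) (trunc n (v(j := 1 - v j)))"
proof -
  have "trunc n (v(j := 1 - v j)) = (trunc n v)(j := 1 - trunc n v j)"
    using assms(3) by (simp add: trunc_fun_upd trunc_def)
  then show ?thesis using adjacent_flip[OF trunc_in_cube[OF assms(1,2)] assms(3)] by simp
qed

lemma sum_cube_eq_card:
  assumes "v \<in> cube m" "finite A"
  shows "(\<Sum>i\<in>A. v i) = card {i\<in>A. v i = 1}"
proof -
  have "(\<Sum>i\<in>A. v i) = (\<Sum>i\<in>A. of_bool (v i = 1))"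
    using cube_coord[OF assms(1)] by (intro sum.cong) force+
  then show ?thesis using assms(2) by (simp add: Int_def)
qed

lemma sum_fun_upd:
  fixes v :: "'a \<Rightarrow> 'b::ab_group_add"
  assumes "finite A" "j \<in> A"
  shows "sum (v(j := y)) A = sum v A - v j + y"
proof -
  have "sum (v(j := y)) (A - {j}) = sum v (A - {j})" by (intro sum.cong) auto
  then show ?thesis using sum.remove[OF assms, of "v(j := y)"] sum.remove[OF assms, of v] by simp
qed

lemma increasing_path_iff_successively:
  "increasing_path m f p \<longleftrightarrow>
     p \<noteq> [] \<and> set p \<subseteq> cube m \<and> successively (\<lambda>v w. adjacent m v w \<and> f v < f w) p"
  by (simp add: increasing_path_def successively_conv_nth)

lemma successively_invariant:
  assumes "successively R xs" "P (hd xs)" "\<And>v w. R v w \<Longrightarrow> P v \<Longrightarrow> P w" "x \<in> set xs"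
  shows "P x"
  using assms by (induction R xs rule: successively.induct) auto

lemma increasing_path_gain_le:
  assumes "increasing_path m f p" "\<And>v w. adjacent m v w \<Longrightarrow> f w - f v \<le> c"
  shows "f (last p) - f (hd p) \<le> c * (length p - 1)"
  using assms(1)
proof (induction p rule: induct_list012)
  case (3 v w p)
  then have "f (last (w # p)) - f w \<le> c * (length (w # p) - 1)"
    by (simp add: increasing_path_iff_successively)
  moreover have "f w - f v \<le> c" using 3(3) assms(2) by (simp add: increasing_path_iff_successively)
  ultimately show ?case by (simp add: algebra_simps)
qed (simp_all add: increasing_path_def)

section \<open>The staircase gadget\<close>

definition stair :: "nat \<Rightarrow> nat \<Rightarrow> real" where
  "stair q i = of_bool (i \<le> q)"

lemma stair_flip_Suc: "(stair q)(Suc q := 1 - stair q (Suc q)) = stair (Suc q)"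
  by (auto simp: stair_def)

text \<open>
  With y = (x_{n+1}, ..., x_{n+4}) and S = x_1 + ... + x_n, the terms that the definition of
  f_{n+4} adds to f_n are gadget S y = S slope(y) + offset(y).
\<close>

locale staircase_gadget =
  fixes n :: nat and M :: real
  assumes n_ge_2: "2 \<le> n" and M_ge_1: "1 \<le> M"
begin

definition slope :: "(nat \<Rightarrow> real) \<Rightarrow> real" where
  "slope y = M * (real n + 1) * y 1 - 2 * M * real n * y 2 - 4 * y 3 + (M * (real n - 1) + 4) * y 4"

definition offset :: "(nat \<Rightarrow> real) \<Rightarrow> real" where
  "offset y = - M * real n ^ 2 * y 1 - y 2 + 2 * M * real n * (real n + 2) * y 1 * y 2
     + 2 * y 1 * y 3 + 2 * y 2 * y 3 - 3 * y 3
     + 6 * M * real n ^ 2 * y 3 * y 4 - 5 * M * real n ^ 2 * y 4"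

definition gadget :: "real \<Rightarrow> (nat \<Rightarrow> real) \<Rightarrow> real" where
  "gadget s y = s * slope y + offset y"

lemma slope_cong:
  assumes "\<And>i. i \<in> {1..4} \<Longrightarrow> y i = y' i"
  shows "slope y = slope y'"
  using assms[of 1] assms[of 2] assms[of 3] assms[of 4] by (simp add: slope_def)

lemma gadget_cong:
  assumes "\<And>i. i \<in> {1..4} \<Longrightarrow> y i = y' i"
  shows "gadget s y = gadget s y'"
  using assms[of 1] assms[of 2] assms[of 3] assms[of 4]
  by (simp add: gadget_def slope_def offset_def)

lemma M_le_mult_pred_n: "M \<le> M * (real n - 1)"
  using mult_left_mono[of 1 "real n - 1" M] M_ge_1 n_ge_2 by simp

lemma slope_stair:
  "slope (stair 0) = 0" "slope (stair 1) = M * (real n + 1)" "slope (stair 2) = - M * (real n - 1)"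
  "slope (stair 3) = - M * (real n - 1) - 4" "slope (stair 4) = 0"
  by (simp_all add: slope_def stair_def algebra_simps)

lemma gadget_stair_Suc:
  fixes s :: real
  shows "gadget s (stair 1) - gadget s (stair 0) = M * (real n + 1) * s - M * real n ^ 2"
    "gadget s (stair 2) - gadget s (stair 1) = 2 * M * real n * (real n - s) + 4 * M * real n - 1"
    "gadget s (stair 3) - gadget s (stair 2) = 1 - 4 * s"
    "gadget s (stair 4) - gadget s (stair 3) = M * real n ^ 2 + (M * (real n - 1) + 4) * s"
  by (simp_all add: gadget_def slope_def offset_def stair_def algebra_simps power2_eq_square)

lemma gadget_flip_stair_less:
  fixes s :: real
  assumes "q \<le> 4" "i \<in> {1..4}" "i \<noteq> Suc q" "0 \<le> s" "s \<le> n"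
    and "q = 1 \<Longrightarrow> s = n" "q = 3 \<Longrightarrow> s = 0"
  shows "gadget s ((stair q)(i := 1 - stair q i)) < gadget s (stair q)"
proof -
  have n: "2 \<le> real n" using n_ge_2 by simp
  have "s \<le> s * real n" using mult_left_mono[of 1 "real n" s] assms(4) n by simp
  then have "0 \<le> M * s" "M * s \<le> M * real n" "0 \<le> M * (s * real n)"
    "M * (s * real n) \<le> M * (real n * real n)" "M * s \<le> M * (s * real n)"
    "real n \<le> M * real n" "real n * real n \<le> M * (real n * real n)" "2 * real n \<le> real n * real n"
    using assms(4,5) M_ge_1 n by (auto intro!: mult_right_mono mult_left_mono)
  note products = this
  \<comment> \<open>after splitting into the cases for q and i, each goal is linear in these products\<close>
  show ?thesis using assms M_ge_1 n
    by (auto simp: gadget_def slope_def offset_def stair_def algebra_simps power2_eq_square)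
      (use products in linarith)+
qed

end

section \<open>One lifting step\<close>

text \<open>
  The passage from f_n to f_{n+4} with an arbitrary function g in place of f_n: of the constant
  M = M_n only the bound on the oscillation of g is used.
\<close>

locale doubling_lift = staircase_gadget n M for n M +
  fixes g :: "(nat \<Rightarrow> real) \<Rightarrow> real"
  assumes g_cong: "(\<And>i. i \<in> {1..n} \<Longrightarrow> x i = y i) \<Longrightarrow> g x = g y"
    and g_oscillation: "v \<in> cube n \<Longrightarrow> w \<in> cube n \<Longrightarrow> g w - g v \<le> M - 1"
begin

definition weight :: "(nat \<Rightarrow> real) \<Rightarrow> real" where
  "weight v = (\<Sum>i = 1..n. v i)"

definition upper :: "(nat \<Rightarrow> real) \<Rightarrow> nat \<Rightarrow> real" where
  "upper v i = v (n + i)"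

definition lift :: "(nat \<Rightarrow> real) \<Rightarrow> real" where
  "lift v = g v + gadget (weight v) (upper v)"

lemma lift_expanded:
  "lift x = g x - M * real n ^ 2 * x (n + 1) + M * (real n + 1) * (\<Sum>i = 1..n. x i) * x (n + 1)
     - x (n + 2) - 2 * M * real n * (\<Sum>i = 1..n. x i) * x (n + 2)
     + 2 * M * real n * (real n + 2) * x (n + 1) * x (n + 2)
     - 4 * (\<Sum>i = 1..n. x i) * x (n + 3) + 2 * x (n + 1) * x (n + 3) + 2 * x (n + 2) * x (n + 3)
     - 3 * x (n + 3) + (M * (real n - 1) + 4) * (\<Sum>i = 1..n. x i) * x (n + 4)
     + 6 * M * real n ^ 2 * x (n + 3) * x (n + 4) - 5 * M * real n ^ 2 * x (n + 4)"
  by (simp add: lift_def gadget_def slope_def offset_def weight_def upper_def algebra_simps)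

lemma g_trunc: "g (trunc n v) = g v"
  by (rule g_cong) (simp add: trunc_def)

lemma weight_trunc: "weight (trunc n v) = weight v"
  by (simp add: weight_def trunc_def)

lemma g_oscillation_cube:
  assumes "v \<in> cube m" "w \<in> cube m" "n \<le> m"
  shows "g w - g v \<le> M - 1"
  using g_oscillation[OF trunc_in_cube[OF assms(1,3)] trunc_in_cube[OF assms(2,3)]]
  by (simp add: g_trunc)

lemma weight_eq_card: "v \<in> cube m \<Longrightarrow> weight v = card {i\<in>{1..n}. v i = 1}"
  by (simp add: weight_def sum_cube_eq_card)

lemma weight_cases:
  assumes "v \<in> cube m"
  obtains c :: nat where "weight v = c" "c \<le> n"
proof
  show "weight v = card {i\<in>{1..n}. v i = 1}" using weight_eq_card[OF assms] .
  have "card {i\<in>{1..n}. v i = 1} \<le> card {1..n}" by (rule card_mono) auto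
  then show "card {i\<in>{1..n}. v i = 1} \<le> n" by simp
qed

lemma weight_bounds: "v \<in> cube m \<Longrightarrow> 0 \<le> weight v \<and> weight v \<le> n"
  by (elim weight_cases) simp

lemma weight_eq_n_iff:
  assumes "v \<in> cube m"
  shows "weight v = n \<longleftrightarrow> (\<forall>i\<in>{1..n}. v i = 1)"
proof -
  have "card {i\<in>{1..n}. v i = 1} = n \<longleftrightarrow> {i\<in>{1..n}. v i = 1} = {1..n}"
    using card_subset_eq[OF finite_atLeastAtMost, of "{i\<in>{1..n}. v i = 1}" 1 n]
    by (auto simp: subset_iff)
  also have "\<dots> \<longleftrightarrow> (\<forall>i\<in>{1..n}. v i = 1)" by blast
  finally show ?thesis by (simp add: weight_eq_card[OF assms])
qed

lemma weight_eq_0_iff: "v \<in> cube m \<Longrightarrow> weight v = 0 \<longleftrightarrow> (\<forall>i\<in>{1..n}. v i = 0)"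
  using cube_coord[of v m] by (force simp: weight_eq_card)

lemma weight_eq_n_if_greater: "v \<in> cube m \<Longrightarrow> real n - 1 < weight v \<Longrightarrow> weight v = n"
  by (elim weight_cases) simp

lemma weight_eq_0_if_less: "v \<in> cube m \<Longrightarrow> weight v < 1 \<Longrightarrow> weight v = 0"
  by (elim weight_cases) simp

lemma lift_flip_lower:
  assumes "j \<in> {1..n}"
  shows "lift (v(j := y)) - lift v = g (v(j := y)) - g v + (y - v j) * slope (upper v)"
proof -
  have upper: "slope (upper (v(j := y))) = slope (upper v)"
    "offset (upper (v(j := y))) = offset (upper v)"
    using assms by (auto simp: upper_def slope_def offset_def)
  have weight: "weight (v(j := y)) = weight v - v j + y"
    unfolding weight_def using assms by (intro sum_fun_upd) auto
  show ?thesis unfolding lift_def gadget_def upper weight by (simp add: algebra_simps)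
qed

lemma lift_flip_upper:
  assumes "i \<in> {1..4}"
  shows "lift (v(n + i := y)) = g v + gadget (weight v) ((upper v)(i := y))"
proof -
  have "g (v(n + i := y)) = g v" using assms by (intro g_cong) auto
  moreover have "weight (v(n + i := y)) = weight v" using assms by (simp add: weight_def)
  moreover have "upper (v(n + i := y)) = (upper v)(i := y)" by (auto simp: upper_def)
  ultimately show ?thesis by (simp add: lift_def)
qed

section \<open>Phases of an ascent\<close>

definition in_phase :: "nat \<Rightarrow> (nat \<Rightarrow> real) \<Rightarrow> bool" where
  "in_phase q v \<longleftrightarrow> v \<in> cube (n + 4) \<and> q \<le> 4 \<and> (\<forall>i\<in>{1..4}. upper v i = stair q i)
     \<and> (q = 1 \<longrightarrow> weight v = n) \<and> (q = 3 \<longrightarrow> weight v = 0)"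

lemma in_phase_unique:
  assumes "in_phase q v" "in_phase q' v"
  shows "q = q'"
proof (rule ccontr)
  assume "q \<noteq> q'"
  moreover have "q \<le> 4" "q' \<le> 4" using assms by (simp_all add: in_phase_def)
  ultimately have m: "max q q' \<in> {1..4}" and ne: "stair q (max q q') \<noteq> stair q' (max q q')"
    by (cases "q \<le> q'"; simp add: stair_def max_def)+
  have "upper v (max q q') = stair q (max q q')" "upper v (max q q') = stair q' (max q q')"
    using assms m by (simp_all add: in_phase_def)
  with ne show False by simp
qed

lemma zero_in_phase: "in_phase 0 (\<lambda>_. 0)"
  by (simp add: in_phase_def zero_in_cube upper_def stair_def weight_def)

lemma all_ones_in_phase: "in_phase 4 (all_ones (n + 4))"
  by (simp add: in_phase_def all_ones_in_cube upper_def stair_def all_ones_def)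

lemma in_phase_1_trunc: "in_phase 1 v \<Longrightarrow> trunc n v = all_ones n"
  by (auto simp: in_phase_def weight_eq_n_iff trunc_def all_ones_def)

lemma in_phase_3_trunc: "in_phase 3 v \<Longrightarrow> trunc n v = (\<lambda>_. 0)"
  by (auto simp: in_phase_def weight_eq_0_iff trunc_def)

lemma in_phase_4_eq_all_ones:
  assumes v: "in_phase 4 v" and top: "trunc n v = all_ones n"
  shows "v = all_ones (n + 4)"
proof
  fix i
  have upper: "\<forall>k\<in>{1..4}. v (n + k) = 1" using v by (auto simp: in_phase_def upper_def stair_def)
  consider "i \<in> {1..n}" | "i \<in> {n + 1..n + 4}" | "i \<notin> {1..n + 4}" by fastforce
  then show "v i = all_ones (n + 4) i"
  proof cases
    case 1
    then show ?thesis using fun_cong[OF top, of i] by (simp add: trunc_def all_ones_def)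
  next
    case 2
    then have "i - n \<in> {1..4}" by auto
    then have "v (n + (i - n)) = 1" using upper by blast
    with 2 show ?thesis by (simp add: all_ones_def)
  next
    case 3
    then show ?thesis using v by (simp add: in_phase_def cube_def all_ones_def)
  qed
qed

lemma lift_in_phase:
  assumes "in_phase q v"
  shows "lift v = g v + gadget (weight v) (stair q)"
proof -
  have "gadget (weight v) (upper v) = gadget (weight v) (stair q)"
    using assms by (intro gadget_cong) (simp add: in_phase_def)
  then show ?thesis by (simp add: lift_def)
qed

lemma slope_upper_in_phase: "in_phase q v \<Longrightarrow> slope (upper v) = slope (stair q)"
  unfolding in_phase_def by (intro slope_cong) auto

lemma lift_flip_upper_in_phase:
  assumes "in_phase q v" "i \<in> {1..4}"
  shows "lift (v(n + i := 1 - v (n + i))) = g v + gadget (weight v) ((stair q)(i := 1 - stair q i))"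
proof -
  have "gadget (weight v) ((upper v)(i := 1 - v (n + i)))
      = gadget (weight v) ((stair q)(i := 1 - stair q i))"
    using assms by (intro gadget_cong) (auto simp: in_phase_def upper_def)
  then show ?thesis using lift_flip_upper[OF assms(2)] by simp
qed

lemma in_phase_flip_lower:
  assumes v: "in_phase q v" and j: "j \<in> {1..n}" and gain: "lift v < lift (v(j := 1 - v j))"
  shows "q \<in> {0, 2, 4}" "in_phase q (v(j := 1 - v j))" "q \<in> {0, 4} \<Longrightarrow> g v < g (v(j := 1 - v j))"
proof -
  define w where "w = v(j := 1 - v j)"
  have vc: "v \<in> cube (n + 4)" and q: "q \<le> 4" using v by (auto simp: in_phase_def)
  have j': "j \<in> {1..n + 4}" using j by auto
  have wc: "w \<in> cube (n + 4)" using flip_in_cube[OF vc j'] by (simp add: w_def)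
  have gain': "0 < g w - g v + (1 - 2 * v j) * slope (stair q)"
    using gain lift_flip_lower[OF j, of v "1 - v j"] slope_upper_in_phase[OF v] by (simp add: w_def)
  have osc: "g w - g v \<le> M - 1" using g_oscillation_cube[OF vc wc] by simp
  have q1: "q \<noteq> 1"
  proof
    assume q1: "q = 1"
    then have "v j = 1" using v j vc by (simp add: in_phase_def weight_eq_n_iff)
    then have "M * (real n + 1) < g w - g v" using gain' q1 slope_stair(2) by simp
    moreover have "M \<le> M * (real n + 1)" using M_ge_1 by simp
    ultimately show False using osc by linarith
  qed
  have q3: "q \<noteq> 3"
  proof
    assume q3: "q = 3"
    then have "v j = 0" using v j vc by (simp add: in_phase_def weight_eq_0_iff)
    then have "M * (real n - 1) + 4 < g w - g v" using gain' q3 slope_stair(4) by simp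
    moreover note M_le_mult_pred_n
    ultimately show False using osc by linarith
  qed
  show "q \<in> {0, 2, 4}" using q q1 q3 by auto
  have "upper w i = upper v i" if "i \<in> {1..4}" for i using that j by (simp add: w_def upper_def)
  moreover have "weight w = weight v - v j + (1 - v j)"
    unfolding weight_def w_def using j by (intro sum_fun_upd) auto
  ultimately show "in_phase q (v(j := 1 - v j))"
    using v wc q1 q3 by (auto simp: in_phase_def w_def)
  show "g v < g (v(j := 1 - v j))" if "q \<in> {0, 4}"
    using gain' that by (auto simp: slope_stair w_def)
qed

lemma in_phase_flip_upper:
  assumes v: "in_phase q v" and i: "i \<in> {1..4}"
    and gain: "lift v < lift (v(n + i := 1 - v (n + i)))"
  shows "i = Suc q" "in_phase (Suc q) (v(n + i := 1 - v (n + i)))"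
proof -
  define s where "s = weight v"
  have vc: "v \<in> cube (n + 4)" and q: "q \<le> 4" using v by (auto simp: in_phase_def)
  have gain': "gadget s (stair q) < gadget s ((stair q)(i := 1 - stair q i))"
    using gain lift_in_phase[OF v] lift_flip_upper_in_phase[OF v i] by (simp add: s_def)
  show "i = Suc q"
  proof (rule ccontr)
    assume "i \<noteq> Suc q"
    then show False
      using gadget_flip_stair_less[OF q i, of s] gain' weight_bounds[OF vc] v
      by (auto simp: s_def in_phase_def)
  qed
  then have gain: "0 < gadget s (stair (Suc q)) - gadget s (stair q)"
    using gain' stair_flip_Suc[of q] by simp
  have "s = n" if "q = 0"
  proof (rule weight_eq_n_if_greater[OF vc, folded s_def])
    have "M * real n ^ 2 < M * ((real n + 1) * s)"
      using gain that gadget_stair_Suc(1)[of s] by (simp add: algebra_simps)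
    then have "real n ^ 2 < (real n + 1) * s" using M_ge_1 by simp
    moreover have "(real n + 1) * (real n - 1) = real n ^ 2 - 1"
      by (simp add: algebra_simps power2_eq_square)
    ultimately have "(real n + 1) * (real n - 1) < (real n + 1) * s" by linarith
    then show "real n - 1 < s" by (simp add: mult_less_cancel_left_pos)
  qed
  moreover have "s = 0" if "q = 2"
    using gain that gadget_stair_Suc(3)[of s] weight_eq_0_if_less[OF vc] by (simp add: s_def)
  moreover have "v (n + i) = stair q i" using v i by (simp add: in_phase_def upper_def)
  moreover have "v (n + i) \<noteq> 1 - v (n + i)" using cube_coord[OF vc, of "n + i"] by auto
  ultimately show "in_phase (Suc q) (v(n + i := 1 - v (n + i)))"
    using v i \<open>i = Suc q\<close> flip_in_cube[OF vc, of "n + i"]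
    by (auto simp: in_phase_def upper_def stair_def weight_def s_def)
qed

lemma in_phase_step:
  assumes v: "in_phase q v" and adj: "adjacent (n + 4) v w" and gain: "lift v < lift w"
  shows "in_phase q w \<and>
      (q \<in> {0, 4} \<longrightarrow> adjacent n (trunc n v) (trunc n w) \<and> g (trunc n v) < g (trunc n w))
    \<or> in_phase (Suc q) w \<and> trunc n w = trunc n v"
proof -
  obtain j where j: "j \<in> {1..n + 4}" and w: "w = v(j := 1 - v j)"
    using adj unfolding adjacent_iff_flip by blast
  have vc: "v \<in> cube (n + 4)" using v by (simp add: in_phase_def)
  show ?thesis
  proof (cases "j \<le> n")
    case True
    then have j': "j \<in> {1..n}" using j by simp
    show ?thesis
      using in_phase_flip_lower[OF v j'] adjacent_trunc_flip[OF vc _ j'] gain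
      by (simp add: w g_trunc)
  next
    case False
    then obtain i where "i \<in> {1..4}" "j = n + i" using j by (intro that[of "j - n"]) auto
    then show ?thesis using in_phase_flip_upper[OF v] gain by (auto simp: w trunc_fun_upd)
  qed
qed

lemma not_local_max_if_stair_gain:
  assumes v: "in_phase q v" and q: "q < 4"
    and gain: "gadget (weight v) (stair q) < gadget (weight v) (stair (q + 1))"
  shows "\<not> local_max (n + 4) lift v"
proof -
  define w where "w = v(n + Suc q := 1 - v (n + Suc q))"
  have "adjacent (n + 4) v w"
    using v q adjacent_flip[of v "n + 4" "n + Suc q"] by (simp add: w_def in_phase_def)
  moreover have "lift v < lift w"
    using lift_in_phase[OF v] lift_flip_upper_in_phase[OF v, of "Suc q"] q gain stair_flip_Suc[of q]
    by (simp add: w_def)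
  ultimately show ?thesis unfolding local_max_def by blast
qed

lemma not_local_max_phase_2:
  assumes v: "in_phase 2 v" and weight: "weight v \<noteq> 0"
  shows "\<not> local_max (n + 4) lift v"
proof -
  have vc: "v \<in> cube (n + 4)" using v by (simp add: in_phase_def)
  obtain j where j: "j \<in> {1..n}" "v j = 1"
    using weight weight_eq_0_iff[OF vc] cube_coord[OF vc] by blast
  define w where "w = v(j := 1 - v j)"
  have j': "j \<in> {1..n + 4}" using j by auto
  have wc: "w \<in> cube (n + 4)" using flip_in_cube[OF vc j'] by (simp add: w_def)
  have "lift w - lift v = g w - g v + M * (real n - 1)"
    using lift_flip_lower[OF j(1), of v "1 - v j"] slope_upper_in_phase[OF v] j
    by (simp add: w_def slope_stair)
  moreover have "g v - g w \<le> M - 1" using g_oscillation_cube[OF wc vc] by simp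
  ultimately have "lift v < lift w" using M_le_mult_pred_n by linarith
  moreover have "adjacent (n + 4) v w" using adjacent_flip[OF vc j'] by (simp add: w_def)
  ultimately show ?thesis unfolding local_max_def by blast
qed

lemma in_phase_not_local_max:
  assumes v: "in_phase q v" and q: "q \<in> {1, 2, 3} \<or> q = 0 \<and> trunc n v = all_ones n"
  shows "\<not> local_max (n + 4) lift v"
proof -
  have Mn: "2 \<le> M * n" using mult_mono[OF M_ge_1, of 2 "real n"] M_ge_1 n_ge_2 by simp
  have "weight (all_ones n) = n" by (simp add: weight_def all_ones_def)
  then have "weight v = n" if "trunc n v = all_ones n" using that weight_trunc[of v] by simp
  then consider "q = 0" "weight v = n" | "q = 1" "weight v = n" | "q = 2" "weight v = 0"
    | "q = 2" "weight v \<noteq> 0" | "q = 3" "weight v = 0"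
    using q v by (auto simp: in_phase_def)
  then show ?thesis
  proof cases
    case 1
    then show ?thesis
      using not_local_max_if_stair_gain[OF v] gadget_stair_Suc(1)[of "weight v"] Mn
      by (simp add: algebra_simps power2_eq_square)
  next
    case 2
    then show ?thesis
      using not_local_max_if_stair_gain[OF v] gadget_stair_Suc(2)[of "weight v"] Mn
      by (simp add: numeral_2_eq_2)
  next
    case 3
    then show ?thesis
      using not_local_max_if_stair_gain[OF v] gadget_stair_Suc(3)[of "weight v"] by simp
  next
    case 4
    then show ?thesis using not_local_max_phase_2 v by simp
  next
    case 5
    have "0 < M * real n ^ 2" using M_ge_1 n_ge_2 by simp
    then show ?thesis
      using not_local_max_if_stair_gain[OF v] gadget_stair_Suc(4)[of "weight v"] 5 by simp
  qed
qed

lemma local_max_trunc: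
  assumes v: "in_phase q v" and q: "q \<in> {0, 4}" and max: "local_max (n + 4) lift v"
  shows "local_max n g (trunc n v)"
  unfolding local_max_def
proof (intro conjI allI impI notI)
  have vc: "v \<in> cube (n + 4)" using v by (simp add: in_phase_def)
  then show "trunc n v \<in> cube n" by (simp add: trunc_in_cube)
  fix w' assume adj: "adjacent n (trunc n v) w'" and gain: "g (trunc n v) < g w'"
  then obtain j where j: "j \<in> {1..n}" and w': "w' = (trunc n v)(j := 1 - trunc n v j)"
    unfolding adjacent_iff_flip by blast
  define w where "w = v(j := 1 - v j)"
  have "trunc n w = w'" using j by (simp add: w_def w' trunc_fun_upd trunc_def)
  then have "g v < g w" using gain g_trunc[of v] g_trunc[of w] by simp
  then have "lift v < lift w"
    using lift_flip_lower[OF j, of v "1 - v j"] slope_upper_in_phase[OF v] q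
    by (auto simp: w_def slope_stair)
  moreover have "adjacent (n + 4) v w" using adjacent_flip[OF vc, of j] j by (simp add: w_def)
  ultimately show False using max unfolding local_max_def by blast
qed

lemma local_max_all_ones:
  assumes max: "local_max n g (all_ones n)"
  shows "local_max (n + 4) lift (all_ones (n + 4))"
  unfolding local_max_def
proof (intro conjI allI impI notI)
  show "all_ones (n + 4) \<in> cube (n + 4)" by (rule all_ones_in_cube)
  fix w assume "adjacent (n + 4) (all_ones (n + 4)) w" "lift (all_ones (n + 4)) < lift w"
  moreover have "\<not> in_phase 5 w" by (simp add: in_phase_def)
  moreover have "trunc n (all_ones (n + 4)) = all_ones n" by (auto simp: trunc_def all_ones_def)
  ultimately have "adjacent n (all_ones n) (trunc n w) \<and> g (all_ones n) < g (trunc n w)"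
    using in_phase_step[OF all_ones_in_phase] by fastforce
  then show False using max unfolding local_max_def by blast
qed

abbreviation lift_ascent :: "(nat \<Rightarrow> real) list \<Rightarrow> bool" where
  "lift_ascent \<equiv> successively (\<lambda>v w. adjacent (n + 4) v w \<and> lift v < lift w)"

lemma ascent_phase_mono:
  assumes "lift_ascent xs" "in_phase q (hd xs)" "v \<in> set xs"
  shows "\<exists>q'\<ge>q. in_phase q' v"
proof (rule successively_invariant[OF assms(1) _ _ assms(3)])
  show "\<exists>q'\<ge>q. in_phase q' (hd xs)" using assms(2) by blast
  fix u w assume "adjacent (n + 4) u w \<and> lift u < lift w" "\<exists>q'\<ge>q. in_phase q' u"
  then show "\<exists>q'\<ge>q. in_phase q' w" using in_phase_step le_SucI by blast
qed

lemma ascent_phase_4: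
  assumes "lift_ascent xs" "in_phase 4 (hd xs)" "v \<in> set xs"
  shows "in_phase 4 v"
proof (rule successively_invariant[where P = "in_phase 4", OF assms(1,2) _ assms(3)])
  fix u w assume "adjacent (n + 4) u w \<and> lift u < lift w" "in_phase 4 u"
  moreover have "\<not> in_phase 5 w" by (simp add: in_phase_def)
  ultimately show "in_phase 4 w" using in_phase_step by fastforce
qed

lemma ascent_trunc_path:
  assumes xs: "xs \<noteq> []" "lift_ascent xs" and phase: "\<forall>v\<in>set xs. in_phase q v" and q: "q \<in> {0, 4}"
  shows "increasing_path n g (map (trunc n) xs)"
proof -
  have "set (map (trunc n) xs) \<subseteq> cube n" using phase trunc_in_cube by (auto simp: in_phase_def)
  moreover have "successively (\<lambda>v w. adjacent n v w \<and> g v < g w) (map (trunc n) xs)"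
    unfolding successively_map using xs(2)
  proof (rule successively_mono)
    fix v w assume "v \<in> set xs" "w \<in> set xs" and step: "adjacent (n + 4) v w \<and> lift v < lift w"
    then have "in_phase q v" "in_phase q w" using phase by auto
    then show "adjacent n (trunc n v) (trunc n w) \<and> g (trunc n v) < g (trunc n w)"
      using in_phase_step[of q v w] in_phase_unique[of q w "Suc q"] step q by auto
  qed
  ultimately show ?thesis using xs(1) by (simp add: increasing_path_iff_successively)
qed

context
  fixes L :: nat
  assumes paths_of_g: "\<And>p. increasing_path n g p \<Longrightarrow> hd p = (\<lambda>_. 0) \<Longrightarrow> local_max n g (last p)
    \<Longrightarrow> last p = all_ones n \<and> L \<le> length p - 1"
begin

lemma ascent_segment_bound:
  assumes xs: "xs \<noteq> []" "lift_ascent xs" "\<forall>v\<in>set xs. in_phase q v" "q \<in> {0, 4}"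
    and start: "trunc n (hd xs) = (\<lambda>_. 0)" and max: "local_max n g (trunc n (last xs))"
  shows "trunc n (last xs) = all_ones n \<and> L \<le> length xs - 1"
  using paths_of_g[OF ascent_trunc_path[OF xs]] start max xs(1) by (simp add: hd_map last_map)

lemma phase_0_prefix:
  assumes top: "local_max n g (all_ones n)"
    and p: "p \<noteq> []" "lift_ascent p" "hd p = (\<lambda>_. 0)" and max: "local_max (n + 4) lift (last p)"
  defines "xs \<equiv> takeWhile (in_phase 0) p" and "ys \<equiv> dropWhile (in_phase 0) p"
  shows "ys \<noteq> [] \<and> in_phase 1 (hd ys) \<and> L \<le> length xs - 1"
proof -
  have p_eq: "p = xs @ ys" by (simp add: xs_def ys_def)
  have xs: "xs \<noteq> []" using p zero_in_phase by (simp add: xs_def takeWhile_eq_Nil_iff)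
  have phase: "\<forall>v\<in>set xs. in_phase 0 v" by (auto simp: xs_def dest: set_takeWhileD)
  have asc: "lift_ascent xs"
    and link: "ys \<noteq> [] \<Longrightarrow> adjacent (n + 4) (last xs) (hd ys) \<and> lift (last xs) < lift (hd ys)"
    using p(2) xs unfolding p_eq successively_append_iff by auto
  have start: "trunc n (hd xs) = (\<lambda>_. 0)" using p(3) p_eq xs by (simp add: trunc_zero)
  have last: "in_phase 0 (last xs)" using phase xs by simp
  have ys: "ys \<noteq> []"
  proof
    assume "ys = []"
    then have "last xs = last p" using p_eq by simp
    then have "local_max n g (trunc n (last xs))" using local_max_trunc[OF last] max by simp
    then have "trunc n (last xs) = all_ones n"
      using ascent_segment_bound[OF xs asc phase _ start] by simp
    then show False using in_phase_not_local_max[OF last] max \<open>last xs = last p\<close> by simp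
  qed
  have "\<not> in_phase 0 (hd ys)" using ys unfolding ys_def by (rule hd_dropWhile)
  then have ys1: "in_phase 1 (hd ys)" and "trunc n (hd ys) = trunc n (last xs)"
    using in_phase_step[OF last] link[OF ys] by auto
  then have "trunc n (last xs) = all_ones n" by (simp add: in_phase_1_trunc)
  then have "L \<le> length xs - 1" using ascent_segment_bound[OF xs asc phase _ start] top by simp
  with ys ys1 show ?thesis by blast
qed

lemma phase_4_suffix:
  assumes ys: "ys \<noteq> []" "lift_ascent ys" "in_phase 1 (hd ys)"
    and max: "local_max (n + 4) lift (last ys)"
  defines "ws \<equiv> takeWhile (\<lambda>v. \<not> in_phase 4 v) ys" and "zs \<equiv> dropWhile (\<lambda>v. \<not> in_phase 4 v) ys"
  shows "ws \<noteq> [] \<and> last ys = all_ones (n + 4) \<and> L \<le> length zs - 1"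
proof -
  have ys_eq: "ys = ws @ zs" by (simp add: ws_def zs_def)
  have "\<not> in_phase 4 (hd ys)" using in_phase_unique[OF ys(3), of 4] by auto
  then have ws: "ws \<noteq> []" using ys(1) by (simp add: ws_def takeWhile_eq_Nil_iff)
  obtain q where q: "in_phase q (last ys)" "1 \<le> q"
    using ascent_phase_mono[OF ys(2,3) last_in_set[OF ys(1)]] by auto
  then have "q \<le> 4" by (simp add: in_phase_def)
  moreover have "q \<notin> {1, 2, 3}" using in_phase_not_local_max[OF q(1)] max by blast
  ultimately have "q = 4" using q(2) by auto
  then have last4: "in_phase 4 (last ys)" using q(1) by simp
  then have zs: "zs \<noteq> []" using last_in_set[OF ys(1)] by (auto simp: zs_def)
  have asc: "lift_ascent zs"
    and link: "adjacent (n + 4) (last ws) (hd zs) \<and> lift (last ws) < lift (hd zs)"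
    using ys(2) ws zs unfolding ys_eq successively_append_iff by auto
  have zs4: "in_phase 4 (hd zs)"
    using hd_dropWhile[of "\<lambda>v. \<not> in_phase 4 v" ys] zs unfolding zs_def by blast
  then have phase: "\<forall>v\<in>set zs. in_phase 4 v" using ascent_phase_4[OF asc] by blast
  have "last ws \<in> set ys" using ws ys_eq by simp
  then obtain q where q: "in_phase q (last ws)" using ascent_phase_mono[OF ys(2,3)] by blast
  have "last ws \<in> set ws" using ws by simp
  then have "\<not> in_phase 4 (last ws)" unfolding ws_def by (blast dest: set_takeWhileD)
  then have "\<not> in_phase q (hd zs)" using q in_phase_unique[OF zs4, of q] by auto
  then have "in_phase (Suc q) (hd zs)" and trunc_eq: "trunc n (hd zs) = trunc n (last ws)"
    using in_phase_step[OF q] link by blast+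
  then have "q = 3" using in_phase_unique[OF zs4, of "Suc q"] by simp
  then have start: "trunc n (hd zs) = (\<lambda>_. 0)" using q trunc_eq by (simp add: in_phase_3_trunc)
  have "last zs = last ys" using ys_eq zs by simp
  then have "local_max n g (trunc n (last zs))" using local_max_trunc[OF last4] max by simp
  then have "trunc n (last zs) = all_ones n \<and> L \<le> length zs - 1"
    using ascent_segment_bound[OF zs asc phase _ start] by simp
  then show ?thesis using ws in_phase_4_eq_all_ones[OF last4] \<open>last zs = last ys\<close> by simp
qed

lemma increasing_path_lift_doubles:
  assumes top: "local_max n g (all_ones n)"
    and path: "increasing_path (n + 4) lift p" "hd p = (\<lambda>_. 0)" "local_max (n + 4) lift (last p)"
  shows "last p = all_ones (n + 4) \<and> 2 * L \<le> length p - 1"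
proof -
  define xs ys where "xs = takeWhile (in_phase 0) p" and "ys = dropWhile (in_phase 0) p"
  define ws zs
    where "ws = takeWhile (\<lambda>v. \<not> in_phase 4 v) ys" and "zs = dropWhile (\<lambda>v. \<not> in_phase 4 v) ys"
  have p: "p \<noteq> []" "lift_ascent p" using path(1) by (simp_all add: increasing_path_iff_successively)
  then have ys: "ys \<noteq> []" "in_phase 1 (hd ys)" and xs: "L \<le> length xs - 1"
    using phase_0_prefix[OF top p path(2,3)] by (simp_all add: xs_def ys_def)
  have p_eq: "p = xs @ ys" by (simp add: xs_def ys_def)
  then have "lift_ascent ys" using p(2) by (simp add: successively_append_iff)
  moreover have "last ys = last p" using p_eq ys(1) by simp
  ultimately have "ws \<noteq> [] \<and> last p = all_ones (n + 4) \<and> L \<le> length zs - 1"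
    using phase_4_suffix[OF ys(1) _ ys(2)] path(3) by (simp add: ws_def zs_def)
  moreover have "ys = ws @ zs" by (simp add: ws_def zs_def)
  moreover have "xs \<noteq> []" using p path(2) zero_in_phase by (simp add: xs_def takeWhile_eq_Nil_iff)
  ultimately show ?thesis using p_eq xs by auto
qed

end

end

section \<open>The functions f_n\<close>

definition spread :: "nat \<Rightarrow> real" where
  "spread k = Max (fpoly_aux k ` cube (4 * k + 2)) - Min (fpoly_aux k ` cube (4 * k + 2)) + 1"

lemma fpoly_aux_cong: "(\<And>i. i \<in> {1..4 * k + 2} \<Longrightarrow> x i = y i) \<Longrightarrow> fpoly_aux k x = fpoly_aux k y"
proof (induction k arbitrary: x y)
  case (Suc k)
  have "fpoly_aux k x = fpoly_aux k y" using Suc.prems by (intro Suc.IH) auto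
  moreover have "(\<Sum>i = 1..4 * k + 2. x i) = (\<Sum>i = 1..4 * k + 2. y i)"
    using Suc.prems by (intro sum.cong) auto
  moreover have "x (4 * k + 2 + 1) = y (4 * k + 2 + 1)" "x (4 * k + 2 + 2) = y (4 * k + 2 + 2)"
    "x (4 * k + 2 + 3) = y (4 * k + 2 + 3)" "x (4 * k + 2 + 4) = y (4 * k + 2 + 4)"
    using Suc.prems by auto
  ultimately show ?case unfolding fpoly_aux.simps Let_def by (simp only:)
qed simp

lemma doubling_lift_fpoly_aux: "doubling_lift (4 * k + 2) (spread k) (fpoly_aux k)"
proof
  let ?F = "fpoly_aux k ` cube (4 * k + 2)"
  have bounds: "Min ?F \<le> fpoly_aux k v" "fpoly_aux k v \<le> Max ?F" if "v \<in> cube (4 * k + 2)" for v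
    using that finite_cube by simp_all
  show "2 \<le> 4 * k + 2" by simp
  show "1 \<le> spread k" using bounds[OF zero_in_cube] unfolding spread_def by linarith
  show "fpoly_aux k x = fpoly_aux k y" if "\<And>i. i \<in> {1..4 * k + 2} \<Longrightarrow> x i = y i" for x y
    using that by (rule fpoly_aux_cong)
  show "fpoly_aux k w - fpoly_aux k v \<le> spread k - 1"
    if "v \<in> cube (4 * k + 2)" "w \<in> cube (4 * k + 2)" for v w
    using bounds[OF that(1)] bounds[OF that(2)] unfolding spread_def by linarith
qed

lemma fpoly_aux_Suc: "fpoly_aux (Suc k) = doubling_lift.lift (4 * k + 2) (spread k) (fpoly_aux k)"
proof
  interpret doubling_lift "4 * k + 2" "spread k" "fpoly_aux k" by (rule doubling_lift_fpoly_aux)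
  show "fpoly_aux (Suc k) x = lift x" for x
    unfolding fpoly_aux.simps Let_def lift_expanded by (simp add: spread_def)
qed

lemma fpoly_aux_0_flip:
  assumes "j \<in> {1..2}"
  shows "fpoly_aux 0 (v(j := 1 - v j)) = fpoly_aux 0 v + 1 - 2 * v j"
proof -
  have "j = 1 \<or> j = 2" using assms by auto
  then show ?thesis by auto
qed

lemma fpoly_aux_0_local_max_iff: "local_max 2 (fpoly_aux 0) v \<longleftrightarrow> v = all_ones 2"
proof
  assume max: "local_max 2 (fpoly_aux 0) v"
  then have v: "v \<in> cube 2" by (simp add: local_max_def)
  have ones: "v j = 1" if j: "j \<in> {1..2}" for j
  proof (rule ccontr)
    assume "v j \<noteq> 1"
    then have "fpoly_aux 0 v < fpoly_aux 0 (v(j := 1 - v j))"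
      using cube_coord[OF v, of j] fpoly_aux_0_flip[OF j, of v] by simp
    then show False using max adjacent_flip[OF v j] unfolding local_max_def by blast
  qed
  show "v = all_ones 2"
  proof
    fix i show "v i = all_ones 2 i"
      using ones[of i] v by (cases "i \<in> {1..2}") (simp_all add: cube_def all_ones_def)
  qed
next
  assume v: "v = all_ones 2"
  have "fpoly_aux 0 w < fpoly_aux 0 v" if adj: "adjacent 2 v w" for w
  proof -
    obtain j where j: "j \<in> {1..2}" and w: "w = v(j := 1 - v j)"
      using adj unfolding adjacent_iff_flip by blast
    have "v j = 1" using j by (simp add: v all_ones_def)
    then show ?thesis using fpoly_aux_0_flip[OF j, of v] w by simp
  qed
  then show "local_max 2 (fpoly_aux 0) v"
    unfolding local_max_def using all_ones_in_cube v by (blast dest: less_asym)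
qed

lemma fpoly_aux_0_paths:
  assumes path: "increasing_path 2 (fpoly_aux 0) p" and start: "hd p = (\<lambda>_. 0)"
    and max: "local_max 2 (fpoly_aux 0) (last p)"
  shows "last p = all_ones 2 \<and> 2 \<le> length p - 1"
proof -
  have "fpoly_aux 0 w - fpoly_aux 0 v \<le> 1" if adj: "adjacent 2 v w" for v w
  proof -
    obtain j where j: "j \<in> {1..2}" and w: "w = v(j := 1 - v j)" and v: "v \<in> cube 2"
      using adj unfolding adjacent_iff_flip by blast
    then show ?thesis using fpoly_aux_0_flip[OF j, of v] cube_coord[OF v, of j] by auto
  qed
  then have "fpoly_aux 0 (last p) - fpoly_aux 0 (hd p) \<le> length p - 1"
    using increasing_path_gain_le[OF path, of 1] by simp
  moreover have "last p = all_ones 2" using max fpoly_aux_0_local_max_iff by blast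
  ultimately show ?thesis using start by (simp add: all_ones_def)
qed

lemma fpoly_aux_increasing_paths:
  "local_max (4 * k + 2) (fpoly_aux k) (all_ones (4 * k + 2)) \<and>
   (\<forall>p. increasing_path (4 * k + 2) (fpoly_aux k) p \<longrightarrow> hd p = (\<lambda>_. 0)
      \<longrightarrow> local_max (4 * k + 2) (fpoly_aux k) (last p)
      \<longrightarrow> last p = all_ones (4 * k + 2) \<and> 2 ^ (k + 1) \<le> length p - 1)"
proof (induction k)
  case 0
  have "4 * 0 + 2 = (2 :: nat)" "2 ^ (0 + 1) = (2 :: nat)" by simp_all
  then show ?case using fpoly_aux_0_paths fpoly_aux_0_local_max_iff by (simp only:) blast
next
  case (Suc k)
  interpret doubling_lift "4 * k + 2" "spread k" "fpoly_aux k" by (rule doubling_lift_fpoly_aux)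
  have top: "local_max (4 * k + 2) (fpoly_aux k) (all_ones (4 * k + 2))" using Suc.IH by blast
  have "4 * Suc k + 2 = 4 * k + 2 + 4" "(2 :: nat) ^ (Suc k + 1) = 2 * 2 ^ (k + 1)" by simp_all
  then show ?case
    unfolding fpoly_aux_Suc
    using local_max_all_ones[OF top] increasing_path_lift_doubles[of "2 ^ (k + 1)", OF _ top] Suc.IH
    by simp
qed

theorem theorem1:
  fixes n :: nat and p :: "(nat \<Rightarrow> real) list"
  assumes "n mod 4 = 2"
    and "increasing_path n (fpoly n) p"
    and "hd p = (\<lambda>_. 0)"
    and "local_max n (fpoly n) (last p)"
  shows "real (length p - 1) \<ge> 2 powr (real n / 4)"
proof -
  define k where "k = (n - 2) div 4"
  have n: "n = 4 * k + 2" using assms(1) unfolding k_def by presburger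
  then have "fpoly n = fpoly_aux k" by (simp add: fpoly_def)
  then have "2 ^ (k + 1) \<le> length p - 1" using fpoly_aux_increasing_paths[of k] assms(2-4) n by auto
  then have "(2 :: real) ^ (k + 1) \<le> real (length p - 1)"
    by (metis of_nat_le_iff of_nat_numeral of_nat_power)
  moreover have "(2 :: real) powr real (k + 1) = 2 ^ (k + 1)" by (rule powr_realpow) simp
  moreover have "2 powr (real n / 4) \<le> 2 powr real (k + 1)" by (intro powr_mono) (auto simp: n)
  ultimately show ?thesis by linarith
qed

end
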